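(* Suppose Assumption 1 holds, $f$ is convex, $F$ is $\mu$-optimal-set-strongly convex for some $\mu>0$, every $d^k$ computed in Algorithm 2 satisfies the $\eta$-inexactness condition for a fixed $\eta\in[0,1)$, and for all $k$ the initial matrices satisfy $m_0I\preceq H^0_k\preceq M_0I$ with $M_0>0$, $m_0\le M_0$ (and $m_0>0$ for Variant 1). Then for all $k=0,1,2,\dots$, with $H_k$ the final (accepted) matrix, $$\frac{F(x^{k+1})-F^*}{F(x^k)-F^*}\le1-\gamma\frac{\mu(1-\eta)}{\mu+\|H_k\|},$$ and the right-hand side is at most $1-\gamma\frac{\mu(1-\eta)}{\mu+\tilde M_1(\eta)}$ for Variant 1 and at most $1-\gamma\frac{\mu(1-\eta)}{\mu+\tilde M_2(\eta)}$ for Variant 2. Moreover, for every $k$ with $F(x^k)-F^*\ge(x^k-P_\Omega(x^k))^TH_k(x^k-P_\Omega(x^k))$ (and the final $H_k\succeq0$), one has $\frac{F(x^{k+1})-F^*}{F(x^k)-F^*}\le1-\frac{(1-\eta)\gamma}{2}$.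
   Context: Problem setting: $F(x)=f(x)+\psi(x)$ on $\mathbb{R}^n$, $F^*=\inf F$, $\Omega=\{x:F(x)=F^*\}$, $P_\Omega$ the Euclidean projection onto $\Omega$, $\|\cdot\|$ the Euclidean / spectral norm. Assumption 1: $f$ is differentiable with $L$-Lipschitz continuous gradient ($L>0$); $\psi:\mathbb{R}^n\to\mathbb{R}\cup\{+\infty\}$ is convex, proper and closed; $F$ is bounded below; $\Omega$ is nonempty. $F$ is $\mu$-optimal-set-strongly convex ($\mu\ge0$) if for all $x$ and all $\lambda\in[0,1]$: $F(\lambda x+(1-\lambda)P_\Omega(x))\le\lambda F(x)+(1-\lambda)F^*-\frac{\mu\lambda(1-\lambda)}2\|x-P_\Omega(x)\|^2$. For $x\in\mathbb{R}^n$ and symmetric $H$, $Q^x_H(d)\coloneqq\nabla f(x)^Td+\frac12d^THd+\psi(x+d)-\psi(x)$, $Q^*=\inf_dQ^x_H(d)$; $d$ satisfies the $\eta$-inexactness condition if $Q^x_H(d)\le(1-\eta)Q^*$. Algorithm 2: given $\beta\in(0,1)$, $\gamma\in(0,1]$, $x^0$, fixed $\eta\in[0,1)$; for each $k$: choose symmetric $H^0_k$ (in Variant 1, $H^0_k\succ0$); set $\alpha_k\leftarrow1$, $H_k\leftarrow H^0_k$, compute $d^k$ satisfying the $\eta$-inexactness condition for $Q^{x^k}_{H_k}$; while $F(x^k)-F(x^k+d^k)\ge-\gamma Q^{x^k}_{H_k}(d^k)\ge0$ fails: Variant 1 sets $\alpha_k\leftarrow\beta\alpha_k$, $H_k\leftarrow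 H^0_k/\alpha_k$; Variant 2 sets $H_k\leftarrow H^0_k+\alpha_k^{-1}I$, then $\alpha_k\leftarrow\beta\alpha_k$; then $d^k$ is recomputed satisfying the $\eta$-inexactness condition. Finally $x^{k+1}=x^k+d^k$; "final $H_k$" is the accepted matrix. Constants: $\tilde M_2(\eta)\coloneqq M_0+\max\{1,\frac1\beta(\frac{L(1+\sqrt\eta)}{2-\gamma(1-\sqrt\eta)}-m_0)\}$, $\tilde M_1(\eta)\coloneqq M_0\max\{1,\frac{L(1+\sqrt\eta)}{\beta(2-\gamma(1-\sqrt\eta))m_0}\}$. *)

theory Defs
  imports "HOL-Analysis.Analysis"
begin

definition symmetric_mat :: "real^'n^'n \<Rightarrow> bool" where
  "symmetric_mat A \<longleftrightarrow> transpose A = A"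

definition loewner_le :: "real^'n^'n \<Rightarrow> real^'n^'n \<Rightarrow> bool" where
  "loewner_le A B \<longleftrightarrow> (\<forall>v. v \<bullet> (A *v v) \<le> v \<bullet> (B *v v))"

definition spec_norm :: "real^'n^'n \<Rightarrow> real" where
  "spec_norm A = onorm (\<lambda>v. A *v v)"

text \<open>The extended-valued psi is represented by its effective domain D and its
  (real) values on D; psi = +infinity outside D.  Convex, proper and closed:\<close>

definition convex_proper_closed :: "(real^'n) set \<Rightarrow> (real^'n \<Rightarrow> real) \<Rightarrow> bool" where
  "convex_proper_closed D psi \<longleftrightarrow>
     D \<noteq> {} \<and> convex D \<and> convex_on D psi \<and>
     closed {(x, t). x \<in> D \<and> psi x \<le> t}"

definition Fval :: "(real^'n \<Rightarrow> real) \<Rightarrow> (real^'n \<Rightarrow> real) \<Rightarrow> real^'n \<Rightarrow> real" where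
  "Fval f psi x = f x + psi x"

definition Fstar :: "(real^'n) set \<Rightarrow> (real^'n \<Rightarrow> real) \<Rightarrow> (real^'n \<Rightarrow> real) \<Rightarrow> real" where
  "Fstar D f psi = Inf (Fval f psi ` D)"

definition optset :: "(real^'n) set \<Rightarrow> (real^'n \<Rightarrow> real) \<Rightarrow> (real^'n \<Rightarrow> real) \<Rightarrow> (real^'n) set" where
  "optset D f psi = {x \<in> D. Fval f psi x = Fstar D f psi}"

definition projOmega :: "(real^'n) set \<Rightarrow> (real^'n \<Rightarrow> real) \<Rightarrow> (real^'n \<Rightarrow> real) \<Rightarrow> real^'n \<Rightarrow> real^'n" where
  "projOmega D f psi x = closest_point (optset D f psi) x"

text \<open>mu-optimal-set-strong convexity (trivial for x outside dom F, where F x = +infinity).\<close>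
definition opt_set_strongly_convex ::
  "(real^'n) set \<Rightarrow> (real^'n \<Rightarrow> real) \<Rightarrow> (real^'n \<Rightarrow> real) \<Rightarrow> real \<Rightarrow> bool" where
  "opt_set_strongly_convex D f psi mu \<longleftrightarrow>
     (\<forall>x\<in>D. \<forall>lam\<in>{0..1}.
        let p = projOmega D f psi x; z = lam *\<^sub>R x + (1 - lam) *\<^sub>R p in
        z \<in> D \<and>
        Fval f psi z \<le> lam * Fval f psi x + (1 - lam) * Fstar D f psi
                        - mu * lam * (1 - lam) / 2 * (norm (x - p))\<^sup>2)"

text \<open>The model Q^x_H(d) (finite exactly when x + d is in D), its infimum, and
  eta-inexactness (impossible when Q is unbounded below, i.e. Q^* = -infinity).\<close>
definition Qfun :: "(real^'n \<Rightarrow> real^'n) \<Rightarrow> (real^'n \<Rightarrow> real) \<Rightarrow> real^'n \<Rightarrow> real^'n^'n \<Rightarrow> real^'n \<Rightarrow> real" where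
  "Qfun g psi x H d = g x \<bullet> d + 1/2 * (d \<bullet> (H *v d)) + psi (x + d) - psi x"

definition Qvals :: "(real^'n) set \<Rightarrow> (real^'n \<Rightarrow> real^'n) \<Rightarrow> (real^'n \<Rightarrow> real) \<Rightarrow> real^'n \<Rightarrow> real^'n^'n \<Rightarrow> real set" where
  "Qvals D g psi x H = {Qfun g psi x H d | d. x + d \<in> D}"

definition Qstar :: "(real^'n) set \<Rightarrow> (real^'n \<Rightarrow> real^'n) \<Rightarrow> (real^'n \<Rightarrow> real) \<Rightarrow> real^'n \<Rightarrow> real^'n^'n \<Rightarrow> real" where
  "Qstar D g psi x H = Inf (Qvals D g psi x H)"

definition eta_inexact :: "(real^'n) set \<Rightarrow> (real^'n \<Rightarrow> real^'n) \<Rightarrow> (real^'n \<Rightarrow> real) \<Rightarrow> real \<Rightarrow>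
     real^'n \<Rightarrow> real^'n^'n \<Rightarrow> real^'n \<Rightarrow> bool" where
  "eta_inexact D g psi eta x H d \<longleftrightarrow>
     x + d \<in> D \<and> bdd_below (Qvals D g psi x H) \<and>
     Qfun g psi x H d \<le> (1 - eta) * Qstar D g psi x H"

definition accepted :: "(real^'n \<Rightarrow> real) \<Rightarrow> (real^'n \<Rightarrow> real^'n) \<Rightarrow> (real^'n \<Rightarrow> real) \<Rightarrow> real \<Rightarrow>
     real^'n \<Rightarrow> real^'n^'n \<Rightarrow> real^'n \<Rightarrow> bool" where
  "accepted f g psi gamma x H d \<longleftrightarrow>
     Fval f psi x - Fval f psi (x + d) \<ge> - gamma * Qfun g psi x H d \<and>
     - gamma * Qfun g psi x H d \<ge> 0"

text \<open>The matrix used in the j-th trial (j = 0 is the initial trial) of iteration k.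
  Variant 1: H^0_k / beta^j.  Variant 2: H^0_k for j = 0, H^0_k + beta^(-(j-1)) I for j >= 1.\<close>
definition Htrial :: "nat \<Rightarrow> real \<Rightarrow> real^'n^'n \<Rightarrow> nat \<Rightarrow> real^'n^'n" where
  "Htrial variant beta H0 j =
     (if variant = 1 then (1 / beta ^ j) *\<^sub>R H0
      else if j = 0 then H0 else H0 + (1 / beta ^ (j - 1)) *\<^sub>R mat 1)"

definition Mtilde1 :: "real \<Rightarrow> real \<Rightarrow> real \<Rightarrow> real \<Rightarrow> real \<Rightarrow> real \<Rightarrow> real" where
  "Mtilde1 L beta gamma m0 M0 eta =
     M0 * max 1 (L * (1 + sqrt eta) / (beta * (2 - gamma * (1 - sqrt eta)) * m0))"

definition Mtilde2 :: "real \<Rightarrow> real \<Rightarrow> real \<Rightarrow> real \<Rightarrow> real \<Rightarrow> real \<Rightarrow> real" where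
  "Mtilde2 L beta gamma m0 M0 eta =
     M0 + max 1 ((1 / beta) * (L * (1 + sqrt eta) / (2 - gamma * (1 - sqrt eta)) - m0))"

end

theory Submission
  imports Defs
begin

text \<open>An accepted step decreases \<open>F\<close> by at least \<open>\<gamma>(1 - \<eta>)\<close> times the optimal model
  decrease \<open>-Q\<^sup>*\<close>.  Evaluating the model along the segment from \<open>x\<close> towards its projection
  \<open>p\<close> onto the optimal set, convexity of \<open>f\<close> and optimal-set strong convexity give
  \<open>Q\<^sup>* \<le> -\<lambda>(F x - F\<^sup>*) - \<mu>\<lambda>(1-\<lambda>)/2 \<parallel>x-p\<parallel>\<^sup>2 + \<lambda>\<^sup>2/2 (x-p)\<^sup>T H (x-p)\<close>, and the choices
  \<open>\<lambda> = \<mu>/(\<mu> + \<parallel>H\<parallel>)\<close> and \<open>\<lambda> = 1\<close> yield the two rates.  The bounds on \<open>\<parallel>H\<^sub>k\<parallel>\<close> hold because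
  backtracking stops at the latest at the first trial matrix with \<open>H \<succeq> c I\<close>,
  \<open>c = L(1+\<surd>\<eta>)/(2-\<gamma>(1-\<surd>\<eta>))\<close>: comparing \<open>Q(d)\<close> with \<open>Q(t d)\<close> shows
  \<open>-Q(d) \<ge> (1-\<surd>\<eta>)/(1+\<surd>\<eta>) \<cdot> c\<parallel>d\<parallel>\<^sup>2/2\<close> for an \<open>\<eta>\<close>-inexact step, and together with the descent
  lemma this is exactly enough for the acceptance test.\<close>

section \<open>Smooth convex functions\<close>

lemma has_real_derivative_along_line:
  fixes f :: "'a::real_inner \<Rightarrow> real"
  assumes grad: "\<And>z. (f has_derivative (\<lambda>h. g z \<bullet> h)) (at z)"
  shows "((\<lambda>t. f (x + t *\<^sub>R d)) has_real_derivative (g (x + t *\<^sub>R d) \<bullet> d)) (at t)"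
proof -
  have "((\<lambda>t. x + t *\<^sub>R d) has_derivative (\<lambda>h. h *\<^sub>R d)) (at t)"
    by (auto intro!: derivative_eq_intros)
  from has_derivative_compose[OF this grad]
  have "((\<lambda>t. f (x + t *\<^sub>R d)) has_derivative (\<lambda>h. h * (g (x + t *\<^sub>R d) \<bullet> d))) (at t)"
    by (simp add: o_def)
  then show ?thesis
    by (simp add: has_field_derivative_def mult.commute[of _ "g (x + t *\<^sub>R d) \<bullet> d"])
qed

lemma lipschitz_gradient_upper_bound:
  fixes f :: "'a::real_inner \<Rightarrow> real"
  assumes grad: "\<And>z. (f has_derivative (\<lambda>h. g z \<bullet> h)) (at z)"
    and Lip: "\<And>y z. norm (g y - g z) \<le> L * norm (y - z)"
  shows "f (x + d) \<le> f x + g x \<bullet> d + L / 2 * (norm d)\<^sup>2"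
proof -
  define \<phi> where "\<phi> t = f (x + t *\<^sub>R d) - t * (g x \<bullet> d) - L / 2 * t\<^sup>2 * (norm d)\<^sup>2" for t
  have \<phi>': "(\<phi> has_real_derivative ((g (x + t *\<^sub>R d) - g x) \<bullet> d - L * t * (norm d)\<^sup>2)) (at t)" for t
    unfolding \<phi>_def
    by (auto intro!: derivative_eq_intros has_real_derivative_along_line[OF grad]
        simp: power2_eq_square inner_diff_left)
  have "(g (x + t *\<^sub>R d) - g x) \<bullet> d \<le> L * t * (norm d)\<^sup>2" if "0 \<le> t" for t
  proof -
    have "(g (x + t *\<^sub>R d) - g x) \<bullet> d \<le> norm (g (x + t *\<^sub>R d) - g x) * norm d"
      by (rule norm_cauchy_schwarz)
    also have "\<dots> \<le> L * norm (t *\<^sub>R d) * norm d"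
      using Lip[of "x + t *\<^sub>R d" x] by (intro mult_right_mono) auto
    finally show ?thesis
      using that by (simp add: power2_eq_square mult_ac)
  qed
  then have "\<phi> 1 \<le> \<phi> 0"
    using \<phi>' by (intro DERIV_nonpos_imp_nonincreasing[of 0 1]) fastforce+
  then show ?thesis
    by (simp add: \<phi>_def)
qed

lemma convex_gradient_inequality:
  fixes f :: "'a::real_inner \<Rightarrow> real"
  assumes grad: "\<And>z. (f has_derivative (\<lambda>h. g z \<bullet> h)) (at z)"
    and conv: "convex_on UNIV f"
  shows "g x \<bullet> (y - x) \<le> f y - f x"
proof -
  define \<phi> where "\<phi> t = f (x + t *\<^sub>R (y - x))" for t
  have "convex_on UNIV \<phi>"
  proof (rule convex_onI)
    fix u s t :: real
    assume "0 < u" "u < 1"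
    moreover have "x + ((1 - u) * s + u * t) *\<^sub>R (y - x)
        = (1 - u) *\<^sub>R (x + s *\<^sub>R (y - x)) + u *\<^sub>R (x + t *\<^sub>R (y - x))"
      by (simp add: algebra_simps)
    ultimately show "\<phi> ((1 - u) *\<^sub>R s + u *\<^sub>R t) \<le> (1 - u) * \<phi> s + u * \<phi> t"
      unfolding \<phi>_def using convex_onD[OF conv, of u] by auto
  qed simp
  then have "g x \<bullet> (y - x) * (1 - 0) \<le> \<phi> 1 - \<phi> 0"
    by (rule convex_on_imp_above_tangent)
      (use has_real_derivative_along_line[OF grad, of x "y - x" 0] in \<open>auto simp: \<phi>_def[abs_def]\<close>)
  then show ?thesis
    by (simp add: \<phi>_def)
qed

section \<open>Quadratic forms and the spectral norm\<close>

lemma scaled_id_loewner_le_iff: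
  "loewner_le (a *\<^sub>R mat 1) H \<longleftrightarrow> (\<forall>v. a * (norm v)\<^sup>2 \<le> v \<bullet> (H *v v))"
  by (simp add: loewner_le_def power2_norm_eq_inner flip: scaleR_matrix_vector_assoc)

lemma loewner_le_scaled_id_iff:
  "loewner_le H (a *\<^sub>R mat 1) \<longleftrightarrow> (\<forall>v. v \<bullet> (H *v v) \<le> a * (norm v)\<^sup>2)"
  by (simp add: loewner_le_def power2_norm_eq_inner flip: scaleR_matrix_vector_assoc)

lemma symmetric_mat_scaleR: "symmetric_mat H \<Longrightarrow> symmetric_mat (a *\<^sub>R H)"
  by (simp add: symmetric_mat_def transpose_scalar)

lemma symmetric_mat_add_scaled_id: "symmetric_mat H \<Longrightarrow> symmetric_mat (H + a *\<^sub>R mat 1)"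
  by (simp add: symmetric_mat_def transpose_def vec_eq_iff mat_def)

lemma symmetric_mat_inner_commute:
  assumes "symmetric_mat H"
  shows "v \<bullet> (H *v w) = w \<bullet> (H *v v)"
proof -
  have "v \<bullet> (H *v w) = (v v* H) \<bullet> w"
    by (simp add: dot_lmul_matrix)
  also have "v v* H = H *v v"
    by (metis assms symmetric_mat_def transpose_matrix_vector)
  finally show ?thesis
    by (simp add: inner_commute)
qed

lemma spec_norm_nonneg: "0 \<le> spec_norm H"
  unfolding spec_norm_def by (rule onorm_pos_le) simp

lemma quadratic_form_le_spec_norm: "v \<bullet> (H *v v) \<le> spec_norm H * (norm v)\<^sup>2"
proof -
  have "v \<bullet> (H *v v) \<le> norm v * norm (H *v v)"
    by (rule norm_cauchy_schwarz)
  also have "\<dots> \<le> norm v * (spec_norm H * norm v)"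
    unfolding spec_norm_def by (intro mult_left_mono onorm) auto
  finally show ?thesis
    by (simp add: power2_eq_square mult_ac)
qed

text \<open>Polarisation: if \<open>w\<close> is \<open>H v\<close> rescaled to the length of \<open>v\<close>, then
  \<open>4 \<parallel>v\<parallel> \<parallel>H v\<parallel> = Q(v + w) - Q(v - w)\<close> for the quadratic form \<open>Q\<close> of the symmetric \<open>H\<close>.\<close>
lemma spec_norm_le_loewner_bounds:
  assumes sym: "symmetric_mat H"
    and "loewner_le (a *\<^sub>R mat 1) H" "loewner_le H (b *\<^sub>R mat 1)"
  shows "spec_norm H \<le> max \<bar>a\<bar> \<bar>b\<bar>"
proof -
  have lower: "a * (norm v)\<^sup>2 \<le> v \<bullet> (H *v v)" and upper: "v \<bullet> (H *v v) \<le> b * (norm v)\<^sup>2" for v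
    using assms by (simp_all add: scaled_id_loewner_le_iff loewner_le_scaled_id_iff)
  define M where "M = max \<bar>a\<bar> \<bar>b\<bar>"
  have abs_quad: "\<bar>u \<bullet> (H *v u)\<bar> \<le> M * (norm u)\<^sup>2" for u
  proof -
    have "- M * (norm u)\<^sup>2 \<le> a * (norm u)\<^sup>2" "b * (norm u)\<^sup>2 \<le> M * (norm u)\<^sup>2"
      by (intro mult_right_mono; simp add: M_def)+
    then show ?thesis
      using lower[of u] upper[of u] by linarith
  qed
  have scaled: "norm v * norm (H *v v) \<le> norm v * (M * norm v)" for v
  proof (cases "H *v v = 0")
    case True
    then show ?thesis by (simp add: M_def)
  next
    case False
    define w where "w = (norm v / norm (H *v v)) *\<^sub>R (H *v v)"
    have norm_w: "norm w = norm v"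
      using False by (simp add: w_def)
    have "w \<bullet> (H *v v) = norm v * norm (H *v v)"
      using False by (simp add: w_def dot_square_norm power2_eq_square)
    moreover have "(v + w) \<bullet> (H *v (v + w)) - (v - w) \<bullet> (H *v (v - w)) = 4 * (w \<bullet> (H *v v))"
      using symmetric_mat_inner_commute[OF sym, of v w]
      by (simp add: matrix_vector_right_distrib matrix_vector_mult_diff_distrib
          inner_add_left inner_add_right inner_diff_left inner_diff_right)
    ultimately have "4 * (norm v * norm (H *v v)) \<le> M * ((norm (v + w))\<^sup>2 + (norm (v - w))\<^sup>2)"
      using abs_quad[of "v + w"] abs_quad[of "v - w"] by (simp add: distrib_left)
    also have "(norm (v + w))\<^sup>2 + (norm (v - w))\<^sup>2 = 4 * (norm v)\<^sup>2"
      using norm_w by (simp add: power2_norm_eq_inner algebra_simps inner_commute)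
        (metis power2_norm_eq_inner)
    finally show ?thesis
      by (simp add: power2_eq_square mult_ac)
  qed
  have "norm (H *v v) \<le> M * norm v" for v
    using scaled[of v] by (cases "v = 0") auto
  then show ?thesis
    unfolding spec_norm_def M_def by (intro onorm_le)
qed

lemma loewner_le_trans: "loewner_le A B \<Longrightarrow> loewner_le B C \<Longrightarrow> loewner_le A C"
  unfolding loewner_le_def by (meson order_trans)

lemma loewner_le_scaleR: "0 \<le> a \<Longrightarrow> loewner_le A B \<Longrightarrow> loewner_le (a *\<^sub>R A) (a *\<^sub>R B)"
  unfolding loewner_le_def by (simp add: mult_left_mono flip: scaleR_matrix_vector_assoc)

lemma loewner_le_add_right: "loewner_le A B \<Longrightarrow> loewner_le (A + C) (B + C)"
  unfolding loewner_le_def by (simp add: matrix_vector_mult_add_rdistrib inner_add_right)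

lemma scaled_id_loewner_le_scaled_id: "a \<le> b \<Longrightarrow> loewner_le (a *\<^sub>R mat 1) (b *\<^sub>R mat 1)"
  unfolding loewner_le_def by (simp add: mult_right_mono flip: scaleR_matrix_vector_assoc)

lemma scaled_id_lt_if_not_loewner_le:
  "loewner_le (a *\<^sub>R mat 1) H \<Longrightarrow> \<not> loewner_le (c *\<^sub>R mat 1) H \<Longrightarrow> a < c"
  using loewner_le_trans scaled_id_loewner_le_scaled_id by (meson not_less)

section \<open>The model and the acceptance test\<close>

lemma Qstar_le_Qfun:
  assumes "bdd_below (Qvals D g psi x H)" "x + d \<in> D"
  shows "Qstar D g psi x H \<le> Qfun g psi x H d"
  unfolding Qstar_def by (rule cInf_lower) (use assms in \<open>auto simp: Qvals_def\<close>)

lemma Qstar_le_segment: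
  assumes D: "convex D" and psi: "convex_on D psi" and x: "x \<in> D" and xd: "x + d \<in> D"
    and bdd: "bdd_below (Qvals D g psi x H)"
    and curv: "loewner_le (c *\<^sub>R mat 1) H" and t: "0 \<le> t" "t \<le> 1"
  shows "Qstar D g psi x H \<le> t * Qfun g psi x H d - t * (1 - t) * (c * (norm d)\<^sup>2 / 2)"
proof -
  have segment: "x + t *\<^sub>R d = (1 - t) *\<^sub>R x + t *\<^sub>R (x + d)"
    by (simp add: algebra_simps)
  have "x + t *\<^sub>R d \<in> D"
    unfolding segment using D x xd t by (simp add: convex_def)
  then have "Qstar D g psi x H \<le> Qfun g psi x H (t *\<^sub>R d)"
    by (rule Qstar_le_Qfun[OF bdd])
  also have "\<dots> \<le> t * (g x \<bullet> d) + t\<^sup>2 / 2 * (d \<bullet> (H *v d)) + t * (psi (x + d) - psi x)"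
  proof -
    have "psi (x + t *\<^sub>R d) \<le> (1 - t) * psi x + t * psi (x + d)"
      unfolding segment using convex_onD[OF psi, of t x "x + d"] t x xd by simp
    then show ?thesis
      by (simp add: Qfun_def power2_eq_square algebra_simps)
  qed
  also have "\<dots> \<le> t * Qfun g psi x H d - t * (1 - t) * (c * (norm d)\<^sup>2 / 2)"
  proof -
    have "c * (norm d)\<^sup>2 \<le> d \<bullet> (H *v d)"
      using curv by (simp add: scaled_id_loewner_le_iff)
    then have "0 \<le> t * (1 - t) / 2 * (d \<bullet> (H *v d) - c * (norm d)\<^sup>2)"
      using t by simp
    also have "\<dots> = t * Qfun g psi x H d - t * (1 - t) * (c * (norm d)\<^sup>2 / 2)
        - (t * (g x \<bullet> d) + t\<^sup>2 / 2 * (d \<bullet> (H *v d)) + t * (psi (x + d) - psi x))"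
      by (simp add: Qfun_def power2_eq_square algebra_simps add_divide_distrib diff_divide_distrib)
    finally show ?thesis
      by simp
  qed
  finally show ?thesis .
qed

lemma inexact_model_value_bound:
  fixes q Qs A eta :: real
  assumes eta: "0 \<le> eta" "eta < 1"
    and inexact: "q \<le> (1 - eta) * Qs"
    and segment: "\<And>t. 0 \<le> t \<Longrightarrow> t \<le> 1 \<Longrightarrow> Qs \<le> t * q - t * (1 - t) * A"
  shows "(1 - sqrt eta) / (1 + sqrt eta) * A \<le> - q"
proof (cases "eta = 0")
  case True
  have "t * A \<le> - q" if "0 < t" "t < 1" for t
  proof -
    have "(1 - t) * q \<le> (1 - t) * (- t * A)"
      using inexact segment[of t] that True by (simp add: algebra_simps)
    then show ?thesis
      using mult_le_cancel_left_pos[of "1 - t" q "- t * A"] that by simp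
  qed
  then show ?thesis
    using True by (simp add: field_le_mult_one_interval)
next
  case False
  define s where "s = sqrt eta"
  define t where "t = 1 / (1 + s)"
  have s: "0 < s" "s < 1" and eta_s: "eta = s\<^sup>2"
    using eta False by (auto simp: s_def)
  have t: "0 \<le> t" "t \<le> 1" and eta_t: "(1 - eta) * t = 1 - s" and one_minus_t: "1 - t = s / (1 + s)"
    using s by (auto simp: t_def eta_s field_simps power2_eq_square)
  have "q \<le> (1 - eta) * (t * q - t * (1 - t) * A)"
    using eta segment[OF t] by (intro order_trans[OF inexact] mult_left_mono) auto
  also have "\<dots> = ((1 - eta) * t) * q - ((1 - eta) * t) * (1 - t) * A"
    by (simp add: algebra_simps)
  finally have "s * ((1 - s) / (1 + s) * A) \<le> s * (- q)"
    unfolding eta_t one_minus_t by (simp add: algebra_simps)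
  then show ?thesis
    using s mult_le_cancel_left_pos[of s] unfolding s_def by blast
qed

definition curvature_threshold :: "real \<Rightarrow> real \<Rightarrow> real \<Rightarrow> real" where
  "curvature_threshold L gamma eta = L * (1 + sqrt eta) / (2 - gamma * (1 - sqrt eta))"

lemma curvature_threshold_denominator_pos:
  "0 \<le> eta \<Longrightarrow> 0 \<le> gamma \<Longrightarrow> gamma \<le> 1 \<Longrightarrow> 0 < 2 - gamma * (1 - sqrt eta)"
  using mult_left_mono[of "1 - sqrt eta" 1 gamma] by simp

lemma curvature_threshold_nonneg:
  "0 \<le> L \<Longrightarrow> 0 \<le> eta \<Longrightarrow> 0 \<le> gamma \<Longrightarrow> gamma \<le> 1 \<Longrightarrow> 0 \<le> curvature_threshold L gamma eta"
  using curvature_threshold_denominator_pos[of eta gamma]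
  by (simp add: curvature_threshold_def)

text \<open>The threshold is chosen so that the curvature deficit \<open>L - c\<close> of the model is paid for by
  the share \<open>1 - \<gamma>\<close> of the guaranteed model decrease that the acceptance test does not claim.\<close>
lemma curvature_threshold_residual:
  assumes eta: "0 \<le> eta" "eta < 1" and gamma: "0 \<le> gamma" "gamma \<le> 1"
  shows "L - curvature_threshold L gamma eta
      = (1 - gamma) * ((1 - sqrt eta) / (1 + sqrt eta) * curvature_threshold L gamma eta)"
proof -
  define c where "c = curvature_threshold L gamma eta"
  define s where "s = sqrt eta"
  have "c * (2 - gamma * (1 - s)) = L * (1 + s)"
    using curvature_threshold_denominator_pos[OF eta(1) gamma]
    by (simp add: c_def curvature_threshold_def s_def)
  then have "(L - c) * (1 + s) = (1 - gamma) * (1 - s) * c"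
    by (simp add: algebra_simps)
  moreover have "0 < 1 + s"
    using real_sqrt_ge_zero[OF eta(1)] unfolding s_def by linarith
  ultimately have "L - c = (1 - gamma) * ((1 - s) / (1 + s) * c)"
    by (simp add: eq_divide_eq)
  then show ?thesis
    by (simp add: c_def s_def)
qed

lemma accepted_if_curvature:
  fixes f psi :: "real^'n \<Rightarrow> real"
  assumes grad: "\<And>z. (f has_derivative (\<lambda>h. g z \<bullet> h)) (at z)"
    and Lip: "\<And>y z. norm (g y - g z) \<le> L * norm (y - z)"
    and D: "convex D" and psi: "convex_on D psi" and x: "x \<in> D"
    and inexact: "eta_inexact D g psi eta x H d"
    and curv: "loewner_le (curvature_threshold L gamma eta *\<^sub>R mat 1) H"
    and eta: "0 \<le> eta" "eta < 1" and gamma: "0 \<le> gamma" "gamma \<le> 1"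
  shows "accepted f g psi gamma x H d"
proof -
  define c where "c = curvature_threshold L gamma eta"
  define s where "s = sqrt eta"
  define q where "q = Qfun g psi x H d"
  define A where "A = c * (norm d)\<^sup>2 / 2"
  have s: "0 \<le> s" "s < 1"
    using eta by (auto simp: s_def)
  have xd: "x + d \<in> D" and bdd: "bdd_below (Qvals D g psi x H)"
    and q_inexact: "q \<le> (1 - eta) * Qstar D g psi x H"
    using inexact by (auto simp: eta_inexact_def q_def)
  note segment = Qstar_le_segment[OF D psi x xd bdd curv[folded c_def]]
  have "q \<le> 0"
    using q_inexact segment[of 0] eta by (simp add: mult_nonneg_nonpos order_trans)
  have model_decrease: "(1 - s) / (1 + s) * A \<le> - q"
    unfolding s_def A_def
    using inexact_model_value_bound[OF eta q_inexact, of "c * (norm d)\<^sup>2 / 2"] segment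
    unfolding q_def by blast
  have "(L - c) / 2 * (norm d)\<^sup>2 = (1 - gamma) * ((1 - s) / (1 + s) * A)"
    using curvature_threshold_residual[OF eta gamma] by (simp add: A_def c_def s_def)
  also have "\<dots> \<le> (1 - gamma) * (- q)"
    using model_decrease gamma by (intro mult_left_mono) auto
  finally have "- gamma * q \<le> - q + (c - L) / 2 * (norm d)\<^sup>2"
    by (simp add: algebra_simps diff_divide_distrib)
  also have "\<dots> \<le> Fval f psi x - Fval f psi (x + d)"
  proof -
    have "c * (norm d)\<^sup>2 \<le> d \<bullet> (H *v d)"
      using curv by (simp add: scaled_id_loewner_le_iff c_def)
    moreover have "(c - L) / 2 * (norm d)\<^sup>2 = c * (norm d)\<^sup>2 / 2 - L / 2 * (norm d)\<^sup>2"
      by (simp add: field_simps)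
    ultimately show ?thesis
      using lipschitz_gradient_upper_bound[OF grad Lip, of x d]
      unfolding Fval_def q_def Qfun_def by linarith
  qed
  finally show ?thesis
    using mult_nonneg_nonpos[OF gamma(1) \<open>q \<le> 0\<close>] by (simp add: accepted_def q_def)
qed

lemma gap_contraction_of_Qstar_bound:
  assumes acc: "accepted f g psi gamma x H d" and inexact: "eta_inexact D g psi eta x H d"
    and gamma: "0 \<le> gamma" and eta: "eta \<le> 1"
    and model: "Qstar D g psi x H \<le> - theta * (Fval f psi x - Fs)"
  shows "Fval f psi (x + d) - Fs \<le> (1 - gamma * (1 - eta) * theta) * (Fval f psi x - Fs)"
proof -
  have "Fval f psi (x + d) \<le> Fval f psi x + gamma * Qfun g psi x H d"
    using acc by (simp add: accepted_def)
  also have "gamma * Qfun g psi x H d \<le> gamma * ((1 - eta) * Qstar D g psi x H)"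
    using inexact gamma by (intro mult_left_mono) (auto simp: eta_inexact_def)
  also have "\<dots> \<le> gamma * ((1 - eta) * (- theta * (Fval f psi x - Fs)))"
    using model gamma eta by (intro mult_left_mono) auto
  finally show ?thesis
    by (simp add: algebra_simps)
qed


lemma Qstar_le_opt_set_bound:
  fixes f psi :: "real^'n \<Rightarrow> real"
  assumes tangent: "\<And>y. g x \<bullet> (y - x) \<le> f y - f x"
    and osc: "opt_set_strongly_convex D f psi mu" and x: "x \<in> D"
    and bdd: "bdd_below (Qvals D g psi x H)" and lam: "0 \<le> lam" "lam \<le> 1"
  defines "r \<equiv> x - projOmega D f psi x"
  shows "Qstar D g psi x H \<le> - lam * (Fval f psi x - Fstar D f psi)
      - mu * lam * (1 - lam) / 2 * (norm r)\<^sup>2 + lam\<^sup>2 / 2 * (r \<bullet> (H *v r))"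
proof -
  define z where "z = (1 - lam) *\<^sub>R x + lam *\<^sub>R projOmega D f psi x"
  have z: "z = x + (- lam) *\<^sub>R r"
    by (simp add: z_def r_def algebra_simps)
  have "z \<in> D" and Fz: "Fval f psi z \<le> (1 - lam) * Fval f psi x + lam * Fstar D f psi
      - mu * lam * (1 - lam) / 2 * (norm r)\<^sup>2"
    using osc x lam unfolding opt_set_strongly_convex_def
    by (auto simp: Let_def z_def r_def mult_ac dest!: bspec[of _ _ x] bspec[of _ _ "1 - lam"])
  have "Qstar D g psi x H \<le> Qfun g psi x H ((- lam) *\<^sub>R r)"
    by (rule Qstar_le_Qfun[OF bdd]) (use \<open>z \<in> D\<close> z in simp)
  also have "\<dots> = g x \<bullet> (z - x) + lam\<^sup>2 / 2 * (r \<bullet> (H *v r)) + psi z - psi x"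
    by (simp add: Qfun_def z power2_eq_square matrix_vector_mult_scaleR[of H "- lam" r]
        del: scaleR_minus_left)
  also have "\<dots> \<le> - lam * (Fval f psi x - Fstar D f psi)
      - mu * lam * (1 - lam) / 2 * (norm r)\<^sup>2 + lam\<^sup>2 / 2 * (r \<bullet> (H *v r))"
    using tangent[of z] Fz by (simp add: Fval_def algebra_simps)
  finally show ?thesis .
qed

lemma Qstar_le_linear_rate:
  fixes f psi :: "real^'n \<Rightarrow> real"
  assumes tangent: "\<And>y. g x \<bullet> (y - x) \<le> f y - f x"
    and osc: "opt_set_strongly_convex D f psi mu" and mu: "0 < mu" and x: "x \<in> D"
    and bdd: "bdd_below (Qvals D g psi x H)"
  shows "Qstar D g psi x H \<le> - (mu / (mu + spec_norm H)) * (Fval f psi x - Fstar D f psi)"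
proof -
  define lam where "lam = mu / (mu + spec_norm H)"
  define r where "r = x - projOmega D f psi x"
  have lam: "0 \<le> lam" "lam \<le> 1" and lam_norm: "lam * spec_norm H = mu * (1 - lam)"
    using spec_norm_nonneg[of H] mu by (auto simp: lam_def field_simps)
  have "lam\<^sup>2 / 2 * (r \<bullet> (H *v r)) \<le> lam\<^sup>2 / 2 * (spec_norm H * (norm r)\<^sup>2)"
    by (intro mult_left_mono quadratic_form_le_spec_norm) auto
  also have "\<dots> = lam * (lam * spec_norm H) / 2 * (norm r)\<^sup>2"
    by (simp add: power2_eq_square)
  also have "\<dots> = mu * lam * (1 - lam) / 2 * (norm r)\<^sup>2"
    unfolding lam_norm by simp
  finally show ?thesis
    using Qstar_le_opt_set_bound[OF tangent osc x bdd lam] unfolding lam_def r_def by linarith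
qed

text \<open>Unlike the paper, no \<open>H \<succeq> 0\<close> is assumed: the choice \<open>\<lambda> = 1\<close> works for every \<open>H\<close>.\<close>
lemma Qstar_le_half_gap:
  fixes f psi :: "real^'n \<Rightarrow> real"
  assumes tangent: "\<And>y. g x \<bullet> (y - x) \<le> f y - f x"
    and osc: "opt_set_strongly_convex D f psi mu" and x: "x \<in> D"
    and bdd: "bdd_below (Qvals D g psi x H)"
    and small: "(x - projOmega D f psi x) \<bullet> (H *v (x - projOmega D f psi x))
      \<le> Fval f psi x - Fstar D f psi"
  shows "Qstar D g psi x H \<le> - (1 / 2) * (Fval f psi x - Fstar D f psi)"
  using Qstar_le_opt_set_bound[OF tangent osc x bdd, of 1] small by (auto simp: field_simps)

section \<open>Backtracking\<close>

lemma spec_norm_Htrial_variant1_le: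
  assumes sym: "symmetric_mat H0"
    and lower: "loewner_le (m0 *\<^sub>R mat 1) H0" and upper: "loewner_le H0 (M0 *\<^sub>R mat 1)"
    and m0: "0 < m0" "m0 \<le> M0" and beta: "0 < beta"
    and rejected: "\<And>j. j < t \<Longrightarrow> \<not> loewner_le (c *\<^sub>R mat 1) (Htrial 1 beta H0 j)"
  shows "spec_norm (Htrial 1 beta H0 t) \<le> M0 * max 1 (c / (beta * m0))"
proof -
  have trial: "Htrial 1 beta H0 j = (1 / beta ^ j) *\<^sub>R H0" for j
    by (simp add: Htrial_def)
  have trial_lower: "loewner_le ((m0 / beta ^ j) *\<^sub>R mat 1) (Htrial 1 beta H0 j)" for j
    unfolding trial using loewner_le_scaleR[OF _ lower, of "1 / beta ^ j"] beta by simp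
  have trial_upper: "loewner_le (Htrial 1 beta H0 j) ((M0 / beta ^ j) *\<^sub>R mat 1)" for j
    unfolding trial using loewner_le_scaleR[OF _ upper, of "1 / beta ^ j"] beta by simp
  have "spec_norm (Htrial 1 beta H0 t) \<le> max \<bar>m0 / beta ^ t\<bar> \<bar>M0 / beta ^ t\<bar>"
    by (rule spec_norm_le_loewner_bounds[OF _ trial_lower trial_upper])
      (unfold trial, rule symmetric_mat_scaleR[OF sym])
  also have "\<dots> = M0 / beta ^ t"
    using m0 beta by (simp add: divide_right_mono)
  also have "\<dots> \<le> M0 * max 1 (c / (beta * m0))"
  proof (cases t)
    case 0
    then show ?thesis
      using m0 by simp
  next
    case (Suc i)
    have "m0 / beta ^ i < c"
      using scaled_id_lt_if_not_loewner_le[OF trial_lower rejected] Suc by simp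
    then have "M0 / beta ^ t \<le> M0 * (c / (beta * m0))"
      using Suc m0 beta by (simp add: field_simps mult_left_mono)
    also have "\<dots> \<le> M0 * max 1 (c / (beta * m0))"
      using m0 by (intro mult_left_mono) auto
    finally show ?thesis .
  qed
  finally show ?thesis .
qed

lemma spec_norm_Htrial_variant2_le:
  assumes sym: "symmetric_mat H0"
    and lower: "loewner_le (m0 *\<^sub>R mat 1) H0" and upper: "loewner_le H0 (M0 *\<^sub>R mat 1)"
    and M0: "0 < M0" "m0 \<le> M0" and c: "0 \<le> c" and beta: "0 < beta" "beta < 1"
    and rejected: "\<And>j. j < t \<Longrightarrow> \<not> loewner_le (c *\<^sub>R mat 1) (Htrial 2 beta H0 j)"
  shows "spec_norm (Htrial 2 beta H0 t) \<le> M0 + max 1 ((1 / beta) * (c - m0))"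
proof -
  define B where "B = max 1 ((1 / beta) * (c - m0))"
  define s where "s j = (if j = 0 then 0 else 1 / beta ^ (j - 1))" for j
  have trial: "Htrial 2 beta H0 j = H0 + s j *\<^sub>R mat 1" for j
    by (simp add: Htrial_def s_def)
  have trial_lower: "loewner_le ((m0 + s j) *\<^sub>R mat 1) (Htrial 2 beta H0 j)" for j
    unfolding trial scaleR_left_distrib using loewner_le_add_right[OF lower] by simp
  have trial_upper: "loewner_le (Htrial 2 beta H0 j) ((M0 + s j) *\<^sub>R mat 1)" for j
    unfolding trial scaleR_left_distrib using loewner_le_add_right[OF upper] by simp
  have s_nonneg: "0 \<le> s t"
    using beta by (simp add: s_def)
  have s_le: "s t \<le> B"
  proof (cases "t \<le> 1")
    case True
    then show ?thesis
      by (auto simp: s_def B_def le_Suc_eq)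
  next
    case False
    then obtain i where t: "t = Suc (Suc i)"
      by (cases t; cases "t - 1") auto
    have "m0 + s (Suc i) < c"
      using scaled_id_lt_if_not_loewner_le[OF trial_lower rejected] t by simp
    then have "1 / beta ^ i / beta \<le> (c - m0) / beta"
      using beta by (intro divide_right_mono) (auto simp: s_def)
    then show ?thesis
      by (simp add: t s_def B_def mult.commute le_max_iff_disj)
  qed
  have "- m0 \<le> M0 + B"
  proof (cases "0 \<le> m0")
    case False
    have "c - m0 \<le> (1 / beta) * (c - m0)"
      using False c beta mult_right_mono[of 1 "1 / beta" "c - m0"] by simp
    then show ?thesis
      using M0 c unfolding B_def by linarith
  qed (use M0 B_def in auto)
  then have "max \<bar>m0 + s t\<bar> \<bar>M0 + s t\<bar> \<le> M0 + B"
    using s_nonneg s_le M0 by auto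
  moreover have "spec_norm (Htrial 2 beta H0 t) \<le> max \<bar>m0 + s t\<bar> \<bar>M0 + s t\<bar>"
    by (rule spec_norm_le_loewner_bounds[OF _ trial_lower trial_upper])
      (unfold trial, rule symmetric_mat_add_scaled_id[OF sym])
  ultimately show ?thesis
    unfolding B_def by linarith
qed

lemma Mtilde1_eq:
  "Mtilde1 L beta gamma m0 M0 eta = M0 * max 1 (curvature_threshold L gamma eta / (beta * m0))"
  by (simp add: Mtilde1_def curvature_threshold_def mult_ac)

lemma Mtilde2_eq:
  "Mtilde2 L beta gamma m0 M0 eta = M0 + max 1 ((1 / beta) * (curvature_threshold L gamma eta - m0))"
  by (simp add: Mtilde2_def curvature_threshold_def)

lemma contraction_factor_mono:
  fixes a b mu gamma eta :: real
  assumes "0 \<le> a" "a \<le> b" "0 < mu" "0 \<le> gamma" "eta \<le> 1"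
  shows "1 - gamma * (mu * (1 - eta) / (mu + a)) \<le> 1 - gamma * (mu * (1 - eta) / (mu + b))"
  using assms by (simp add: mult_left_mono divide_left_mono)

section \<open>Runs of the algorithm\<close>

locale prox_newton_run =
  fixes f psi :: "real^'n \<Rightarrow> real" and g :: "real^'n \<Rightarrow> real^'n"
    and D :: "(real^'n) set"
    and L mu beta gamma eta m0 M0 :: real and variant :: nat
    and x :: "nat \<Rightarrow> real^'n" and H0 :: "nat \<Rightarrow> real^'n^'n"
    and t :: "nat \<Rightarrow> nat" and dtr :: "nat \<Rightarrow> nat \<Rightarrow> real^'n"
  assumes grad: "\<And>z. (f has_derivative (\<lambda>h. g z \<bullet> h)) (at z)"
    and Lpos: "L > 0"
    and Lip: "\<And>y z. norm (g y - g z) \<le> L * norm (y - z)"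
    and psi: "convex_proper_closed D psi"
    and fconv: "convex_on UNIV f"
    and mu: "mu > 0" and osc: "opt_set_strongly_convex D f psi mu"
    and beta: "0 < beta" "beta < 1"
    and gamma: "0 < gamma" "gamma \<le> 1"
    and eta: "0 \<le> eta" "eta < 1"
    and H0_sym: "\<And>k. symmetric_mat (H0 k)"
    and H0_lower: "\<And>k. loewner_le (m0 *\<^sub>R mat 1) (H0 k)"
    and H0_upper: "\<And>k. loewner_le (H0 k) (M0 *\<^sub>R mat 1)"
    and M0: "M0 > 0" and m0M0: "m0 \<le> M0"
    and m0_v1: "variant = 1 \<Longrightarrow> m0 > 0"
    and x0: "x 0 \<in> D"
    and inexact: "\<And>k j. j \<le> t k \<Longrightarrow>
        eta_inexact D g psi eta (x k) (Htrial variant beta (H0 k) j) (dtr k j)"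
    and rejected: "\<And>k j. j < t k \<Longrightarrow>
        \<not> accepted f g psi gamma (x k) (Htrial variant beta (H0 k) j) (dtr k j)"
    and acc: "\<And>k. accepted f g psi gamma (x k) (Htrial variant beta (H0 k) (t k)) (dtr k (t k))"
    and step: "\<And>k. x (Suc k) = x k + dtr k (t k)"
begin

abbreviation accepted_matrix :: "nat \<Rightarrow> real^'n^'n" where
  "accepted_matrix k \<equiv> Htrial variant beta (H0 k) (t k)"

abbreviation gap :: "nat \<Rightarrow> real" where
  "gap k \<equiv> Fval f psi (x k) - Fstar D f psi"

lemma iterate_in_domain: "x k \<in> D"
  by (induction k) (use x0 inexact[OF order_refl] step in \<open>auto simp: eta_inexact_def\<close>)

lemma model_bdd_below: "bdd_below (Qvals D g psi (x k) (accepted_matrix k))"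
  using inexact[OF order_refl] by (simp add: eta_inexact_def)

lemma gap_contraction:
  assumes "Qstar D g psi (x k) (accepted_matrix k) \<le> - theta * gap k"
  shows "gap (Suc k) \<le> (1 - gamma * (1 - eta) * theta) * gap k"
  using gap_contraction_of_Qstar_bound[OF acc inexact[OF order_refl] _ _ assms] gamma eta
  by (simp add: step)

lemma gap_linear_rate:
  "gap (Suc k) \<le> (1 - gamma * (mu * (1 - eta) / (mu + spec_norm (accepted_matrix k)))) * gap k"
  using gap_contraction[OF Qstar_le_linear_rate[OF convex_gradient_inequality[OF grad fconv]
        osc mu iterate_in_domain model_bdd_below]]
  by (simp add: mult_ac)

lemma gap_half_rate:
  assumes "(x k - projOmega D f psi (x k)) \<bullet> (accepted_matrix k *v (x k - projOmega D f psi (x k)))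
      \<le> gap k"
  shows "gap (Suc k) \<le> (1 - (1 - eta) * gamma / 2) * gap k"
  using gap_contraction[OF Qstar_le_half_gap[OF convex_gradient_inequality[OF grad fconv]
        osc iterate_in_domain model_bdd_below assms]]
  by (simp add: mult_ac)

lemma rejected_trial_below_threshold:
  assumes "j < t k"
  shows "\<not> loewner_le (curvature_threshold L gamma eta *\<^sub>R mat 1) (Htrial variant beta (H0 k) j)"
proof
  have "convex D" "convex_on D psi"
    using psi by (auto simp: convex_proper_closed_def)
  moreover assume "loewner_le (curvature_threshold L gamma eta *\<^sub>R mat 1) (Htrial variant beta (H0 k) j)"
  ultimately show False
    using accepted_if_curvature[OF grad Lip _ _ iterate_in_domain inexact[OF less_imp_le[OF assms]]]
      rejected[OF assms] eta gamma by auto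
qed

lemma spec_norm_accepted_le_Mtilde1:
  assumes "variant = 1"
  shows "spec_norm (accepted_matrix k) \<le> Mtilde1 L beta gamma m0 M0 eta"
  unfolding Mtilde1_eq
  using spec_norm_Htrial_variant1_le[OF H0_sym H0_lower H0_upper m0_v1[OF assms] m0M0 beta(1)]
    rejected_trial_below_threshold assms by auto

lemma spec_norm_accepted_le_Mtilde2:
  assumes "variant = 2"
  shows "spec_norm (accepted_matrix k) \<le> Mtilde2 L beta gamma m0 M0 eta"
  unfolding Mtilde2_eq
  using spec_norm_Htrial_variant2_le[OF H0_sym H0_lower H0_upper M0 m0M0 _ beta]
    curvature_threshold_nonneg rejected_trial_below_threshold assms Lpos eta gamma by auto

end

theorem theorem3:
  fixes f psi :: "real^'n \<Rightarrow> real" and g :: "real^'n \<Rightarrow> real^'n"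
    and D :: "(real^'n) set"
    and L mu beta gamma eta m0 M0 :: real and variant :: nat
    and x :: "nat \<Rightarrow> real^'n" and H0 :: "nat \<Rightarrow> real^'n^'n"
    and t :: "nat \<Rightarrow> nat" and dtr :: "nat \<Rightarrow> nat \<Rightarrow> real^'n"
  assumes grad: "\<And>z. (f has_derivative (\<lambda>h. g z \<bullet> h)) (at z)"
    and Lpos: "L > 0"
    and Lip: "\<And>y z. norm (g y - g z) \<le> L * norm (y - z)"
    and psi: "convex_proper_closed D psi"
    and bdd: "bdd_below (Fval f psi ` D)"
    and Omega_ne: "optset D f psi \<noteq> {}"
    and fconv: "convex_on UNIV f"
    and mu: "mu > 0" and osc: "opt_set_strongly_convex D f psi mu"
    and beta: "0 < beta" "beta < 1"
    and gamma: "0 < gamma" "gamma \<le> 1"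
    and eta: "0 \<le> eta" "eta < 1"
    and variant: "variant \<in> {1, 2}"
    and H0_sym: "\<And>k. symmetric_mat (H0 k)"
    and H0_lower: "\<And>k. loewner_le (m0 *\<^sub>R mat 1) (H0 k)"
    and H0_upper: "\<And>k. loewner_le (H0 k) (M0 *\<^sub>R mat 1)"
    and M0: "M0 > 0" and m0M0: "m0 \<le> M0"
    and m0_v1: "variant = 1 \<Longrightarrow> m0 > 0"
    and x0: "x 0 \<in> D"
    and inexact: "\<And>k j. j \<le> t k \<Longrightarrow>
        eta_inexact D g psi eta (x k) (Htrial variant beta (H0 k) j) (dtr k j)"
    and rejected: "\<And>k j. j < t k \<Longrightarrow>
        \<not> accepted f g psi gamma (x k) (Htrial variant beta (H0 k) j) (dtr k j)"
    and acc: "\<And>k. accepted f g psi gamma (x k) (Htrial variant beta (H0 k) (t k)) (dtr k (t k))"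
    and step: "\<And>k. x (Suc k) = x k + dtr k (t k)"
  shows
    "(\<forall>k. Fval f psi (x (Suc k)) - Fstar D f psi
          \<le> (1 - gamma * (mu * (1 - eta)
                 / (mu + spec_norm (Htrial variant beta (H0 k) (t k)))))
             * (Fval f psi (x k) - Fstar D f psi))
    \<and>
    (\<forall>k. variant = 1 \<longrightarrow>
          1 - gamma * (mu * (1 - eta) / (mu + spec_norm (Htrial variant beta (H0 k) (t k))))
          \<le> 1 - gamma * (mu * (1 - eta) / (mu + Mtilde1 L beta gamma m0 M0 eta)))
    \<and>
    (\<forall>k. variant = 2 \<longrightarrow>
          1 - gamma * (mu * (1 - eta) / (mu + spec_norm (Htrial variant beta (H0 k) (t k))))
          \<le> 1 - gamma * (mu * (1 - eta) / (mu + Mtilde2 L beta gamma m0 M0 eta)))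
    \<and>
    (\<forall>k. (let Hk = Htrial variant beta (H0 k) (t k);
              r = x k - projOmega D f psi (x k) in
          loewner_le 0 Hk \<and> Fval f psi (x k) - Fstar D f psi \<ge> r \<bullet> (Hk *v r) \<longrightarrow>
          Fval f psi (x (Suc k)) - Fstar D f psi
            \<le> (1 - (1 - eta) * gamma / 2) * (Fval f psi (x k) - Fstar D f psi)))"
proof -
  interpret prox_newton_run f psi g D L mu beta gamma eta m0 M0 variant x H0 t dtr
    by unfold_locales (fact assms)+
  show ?thesis
    unfolding Let_def
    using gap_linear_rate gap_half_rate gamma eta
      contraction_factor_mono[OF spec_norm_nonneg spec_norm_accepted_le_Mtilde1 mu]
      contraction_factor_mono[OF spec_norm_nonneg spec_norm_accepted_le_Mtilde2 mu]
    by auto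
qed

end
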